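(* Let $h:(\mathbb{R}^n,0)\to(\mathbb{R}^n,0)$ be an (SSP) bi-Lipschitz homeomorphism germ, and let $A\subset\mathbb{R}^n$ be a set-germ at $0$ with $0\in\overline{A}$. Then $A$ satisfies condition (SSP) if and only if $h(A)$ satisfies condition (SSP).
   Context: For a set-germ $A\subset\mathbb{R}^k$ at $0$ with $0\in\overline A$, the direction set is $D(A)=\{a\in S^{k-1}:\exists\, x_i\in A\setminus\{0\},\ x_i\to0,\ x_i/\|x_i\|\to a\}$. For sequences, $\|u_m\|\ll\|v_m\|,\|w_m\|$ means $\|u_m\|/\|v_m\|\to0$ and $\|u_m\|/\|w_m\|\to0$. A set-germ $A\subset\mathbb{R}^k$ with $0\in\overline A$ satisfies condition (SSP) if for every sequence $a_m\in\mathbb{R}^k$ tending to $0$ with $\lim a_m/\|a_m\|\in D(A)$ there is a sequence $b_m\in A$ with $\|a_m-b_m\|\ll\|a_m\|,\|b_m\|$. A map germ $h:(\mathbb{R}^n,0)\to(\mathbb{R}^n,0)$ is an (SSP) map if its graph $\{(x,h(x))\}\subset\mathbb{R}^n\times\mathbb{R}^n$ satisfies condition (SSP) at $(0,0)$. A bi-Lipschitz homeomorphism germ is a homeomorphism germ $h$ with $h(0)=0$ and constants $0<K_1\le K_2$ with $K_1\|x-y\|\le\|h(x)-h(y)\|\le K_2\|x-y\|$ near $0$; it is an (SSP) bi-Lipschitz homeomorphism if it is moreover an (SSP) map. *)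

theory Defs
  imports "HOL-Analysis.Analysis"
begin

definition direction_set :: "'a::real_normed_vector set \<Rightarrow> 'a set" where
  "direction_set A = {a. norm a = 1 \<and>
     (\<exists>x::nat \<Rightarrow> 'a. (\<forall>i. x i \<in> A - {0}) \<and> x \<longlonglongrightarrow> 0 \<and>
        (\<lambda>i. x i /\<^sub>R norm (x i)) \<longlonglongrightarrow> a)}"

definition much_smaller :: "(nat \<Rightarrow> 'a::real_normed_vector) \<Rightarrow> (nat \<Rightarrow> 'b::real_normed_vector) \<Rightarrow> bool" where
  "much_smaller u v \<longleftrightarrow> eventually (\<lambda>m. v m \<noteq> 0) sequentially \<and>
      (\<lambda>m. norm (u m) / norm (v m)) \<longlonglongrightarrow> 0"

definition SSP :: "'a::real_normed_vector set \<Rightarrow> bool" where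
  "SSP A \<longleftrightarrow> (\<forall>a::nat \<Rightarrow> 'a. a \<longlonglongrightarrow> 0 \<and>
       (\<exists>d\<in>direction_set A. (\<lambda>m. a m /\<^sub>R norm (a m)) \<longlonglongrightarrow> d) \<longrightarrow>
     (\<exists>b. (\<forall>m. b m \<in> A) \<and> much_smaller (\<lambda>m. a m - b m) a
          \<and> much_smaller (\<lambda>m. a m - b m) b))"

text \<open>A map germ represented by h on an open neighbourhood U of 0 is (SSP) if its graph is.\<close>
definition SSP_map_on :: "'a::real_normed_vector set \<Rightarrow> ('a \<Rightarrow> 'a) \<Rightarrow> bool" where
  "SSP_map_on U h \<longleftrightarrow> SSP {(x, h x) | x. x \<in> U}"

definition bilipschitz_homeo_germ_on :: "'a::real_normed_vector set \<Rightarrow> ('a \<Rightarrow> 'a) \<Rightarrow> bool" where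
  "bilipschitz_homeo_germ_on U h \<longleftrightarrow> open U \<and> 0 \<in> U \<and> h 0 = 0 \<and> open (h ` U) \<and>
     (\<exists>g. homeomorphism U (h ` U) h g) \<and>
     (\<exists>K1 K2. 0 < K1 \<and> K1 \<le> K2 \<and>
        (\<forall>x\<in>U. \<forall>y\<in>U. K1 * norm (x - y) \<le> norm (h x - h y) \<and>
                       norm (h x - h y) \<le> K2 * norm (x - y)))"

end

theory Submission
  imports Defs
begin

(*
  (SSP) only depends on the germ, so A may be replaced by A \<inter> U, and both implications
  become instances of one transfer principle, applied to the graphs of (h, id) and (id, h):
  if \<phi>, \<psi> are bi-Lipschitz near 0, fix 0, and the graph {(\<phi> x, \<psi> x)} satisfies (SSP),
  then (SSP) passes from \<psi>(B) to \<phi>(B).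

  Let a tend to 0 in a direction d of \<phi>(B). By compactness of the sphere, d lifts to a
  direction (p, q) of the graph with sgn p = d, and the bi-Lipschitz bounds make q \<noteq> 0 and
  sgn q a direction of \<psi>(B). The (SSP) of the graph approximates (a, |a|/|p| q) by graph
  points (\<phi> w, \<psi> w); so \<psi> w tends to 0 in the direction sgn q and is approximated by points
  \<psi> y of \<psi>(B). As \<phi> \<circ> inv \<psi> is Lipschitz, \<phi> y then approximates \<phi> w, hence a.
*)

section \<open>Much smaller sequences\<close>

lemma much_smaller_iff_eventually:
  "much_smaller u v \<longleftrightarrow>
    (\<forall>e>0. eventually (\<lambda>m. v m \<noteq> 0 \<and> norm (u m) \<le> e * norm (v m)) sequentially)"
proof
  assume "much_smaller u v"
  then have nz: "eventually (\<lambda>m. v m \<noteq> 0) sequentially"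
    and lim: "(\<lambda>m. norm (u m) / norm (v m)) \<longlonglongrightarrow> 0"
    by (auto simp: much_smaller_def)
  show "\<forall>e>0. eventually (\<lambda>m. v m \<noteq> 0 \<and> norm (u m) \<le> e * norm (v m)) sequentially"
  proof (intro allI impI)
    fix e :: real assume "e > 0"
    with lim have "eventually (\<lambda>m. norm (u m) / norm (v m) < e) sequentially"
      by (simp add: tendsto_iff)
    with nz show "eventually (\<lambda>m. v m \<noteq> 0 \<and> norm (u m) \<le> e * norm (v m)) sequentially"
      by eventually_elim (simp add: divide_less_eq)
  qed
next
  assume small: "\<forall>e>0. eventually (\<lambda>m. v m \<noteq> 0 \<and> norm (u m) \<le> e * norm (v m)) sequentially"
  have "eventually (\<lambda>m. v m \<noteq> 0) sequentially"
    using small[rule_format, of 1] by (auto elim: eventually_mono)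
  moreover have "(\<lambda>m. norm (u m) / norm (v m)) \<longlonglongrightarrow> 0"
    unfolding tendsto_iff
  proof (intro allI impI)
    fix e :: real assume "e > 0"
    then have "eventually (\<lambda>m. v m \<noteq> 0 \<and> norm (u m) \<le> e / 2 * norm (v m)) sequentially"
      using small half_gt_zero by blast
    then show "eventually (\<lambda>m. dist (norm (u m) / norm (v m)) 0 < e) sequentially"
    proof eventually_elim
      case (elim m)
      then have "norm (u m) / norm (v m) \<le> e / 2" by (simp add: pos_divide_le_eq)
      with \<open>e > 0\<close> have "norm (u m) / norm (v m) < e" by linarith
      then show ?case by simp
    qed
  qed
  ultimately show "much_smaller u v" by (simp add: much_smaller_def)
qed

lemma much_smaller_eventually_le:
  assumes "much_smaller u v" "e > 0"
  shows "eventually (\<lambda>m. v m \<noteq> 0 \<and> norm (u m) \<le> e * norm (v m)) sequentially"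
  using assms by (simp add: much_smaller_iff_eventually)

lemma much_smaller_bigO:
  assumes small: "much_smaller u v"
    and u: "eventually (\<lambda>m. norm (u' m) \<le> C * norm (u m)) sequentially"
    and v: "eventually (\<lambda>m. norm (v m) \<le> D * norm (v' m)) sequentially"
    and v': "eventually (\<lambda>m. v' m \<noteq> 0) sequentially"
  shows "much_smaller u' v'"
  unfolding much_smaller_iff_eventually
proof (intro allI impI)
  fix e :: real assume "e > 0"
  define C' D' where "C' = max C 1" and "D' = max D 1"
  have pos: "C' > 0" "D' > 0" by (auto simp: C'_def D'_def)
  with \<open>e > 0\<close> have e': "e / (C' * D') > 0" by simp
  note small = much_smaller_eventually_le[OF small e']
  from u v v' small show "eventually (\<lambda>m. v' m \<noteq> 0 \<and> norm (u' m) \<le> e * norm (v' m)) sequentially"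
  proof eventually_elim
    case (elim m)
    have "norm (u' m) \<le> C' * norm (u m)"
    proof -
      have "C * norm (u m) \<le> C' * norm (u m)"
        unfolding C'_def by (intro mult_right_mono) auto
      with elim(1) show ?thesis by linarith
    qed
    also have "\<dots> \<le> C' * (e / (C' * D') * norm (v m))"
      using elim(4) pos by (intro mult_left_mono) auto
    also have "\<dots> \<le> C' * (e / (C' * D') * (D' * norm (v' m)))"
    proof -
      have "D * norm (v' m) \<le> D' * norm (v' m)"
        unfolding D'_def by (intro mult_right_mono) auto
      with elim(2) have "norm (v m) \<le> D' * norm (v' m)" by linarith
      with pos e' show ?thesis by (intro mult_left_mono) auto
    qed
    also have "\<dots> = e * norm (v' m)" using pos by simp
    finally show ?case using elim(3) by simp
  qed
qed

lemma much_smaller_add: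
  assumes "much_smaller u w" "much_smaller v w"
  shows "much_smaller (\<lambda>m. u m + v m) w"
  unfolding much_smaller_iff_eventually
proof (intro allI impI)
  fix e :: real assume "e > 0"
  then have "e / 2 > 0" by simp
  from much_smaller_eventually_le[OF assms(1) this] much_smaller_eventually_le[OF assms(2) this]
  show "eventually (\<lambda>m. w m \<noteq> 0 \<and> norm (u m + v m) \<le> e * norm (w m)) sequentially"
  proof eventually_elim
    case (elim m)
    have "norm (u m + v m) \<le> e / 2 * norm (w m) + e / 2 * norm (w m)"
      using elim norm_triangle_ineq[of "u m" "v m"] by linarith
    with elim show ?case by simp
  qed
qed

lemma norm_sgn_diff_le:
  fixes u v :: "'a::real_normed_vector"
  assumes "v \<noteq> 0"
  shows "norm (sgn u - sgn v) \<le> 2 * (norm (u - v) / norm v)"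
proof (cases "u = 0")
  case True
  with assms show ?thesis by (simp add: norm_sgn)
next
  case False
  have nu: "norm u > 0" and nv: "norm v > 0" using False assms by auto
  define c where "c = (norm v - norm u) / (norm u * norm v)"
  have split: "sgn u - sgn v = (u - v) /\<^sub>R norm v + c *\<^sub>R u"
  proof -
    have "1 / norm v + c = 1 / norm u"
      using nu nv by (simp add: c_def field_simps)
    then have "inverse (norm u) = inverse (norm v) + c" by (simp add: divide_inverse)
    then show ?thesis
      by (simp add: sgn_div_norm scaleR_diff_right scaleR_add_left)
  qed
  have "norm (c *\<^sub>R u) = \<bar>norm v - norm u\<bar> / norm v"
    using nu nv by (simp add: c_def divide_simps abs_mult)
  also have "\<dots> \<le> norm (u - v) / norm v"
    using nv norm_triangle_ineq3[of v u] by (intro divide_right_mono) (auto simp: norm_minus_commute)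
  finally have "norm (c *\<^sub>R u) \<le> norm (u - v) / norm v" .
  moreover have "norm ((u - v) /\<^sub>R norm v) = norm (u - v) / norm v"
    by (simp add: divide_inverse mult.commute)
  ultimately show ?thesis
    unfolding split using norm_triangle_ineq[of "(u - v) /\<^sub>R norm v" "c *\<^sub>R u"] by linarith
qed

lemma eventually_nonzero_if_tendsto_sgn:
  fixes a :: "nat \<Rightarrow> 'a::real_normed_vector"
  assumes "(\<lambda>m. sgn (a m)) \<longlonglongrightarrow> d" "d \<noteq> 0"
  shows "eventually (\<lambda>m. a m \<noteq> 0) sequentially"
  using tendsto_imp_eventually_ne[OF assms] by (rule eventually_mono) auto

lemma tendsto_sgn_rescaled:
  fixes u :: "nat \<Rightarrow> 'a::real_normed_vector"
  assumes "(\<lambda>i. c i *\<^sub>R u i) \<longlonglongrightarrow> l" "\<And>i. c i > 0" "l \<noteq> 0"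
  shows "(\<lambda>i. sgn (u i)) \<longlonglongrightarrow> sgn l"
  using tendsto_sgn[OF assms(1,3)] assms(2) by (simp add: sgn_scaleR)

lemma tendsto_sgn_Pair_rescaled:
  fixes a :: "nat \<Rightarrow> 'a::real_normed_vector" and q :: "'b::real_normed_vector"
  assumes "(\<lambda>m. sgn (a m)) \<longlonglongrightarrow> sgn p" "p \<noteq> 0"
  shows "(\<lambda>m. sgn (a m, (norm (a m) / norm p) *\<^sub>R q)) \<longlonglongrightarrow> sgn (p, q)"
proof -
  have "eventually (\<lambda>m. a m \<noteq> 0) sequentially"
    using eventually_nonzero_if_tendsto_sgn[OF assms(1)] assms(2) by (simp add: sgn_zero_iff)
  then have "eventually (\<lambda>m. sgn (norm p *\<^sub>R sgn (a m), q) =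
      sgn (a m, (norm (a m) / norm p) *\<^sub>R q)) sequentially"
  proof eventually_elim
    case (elim m)
    then have pair: "(a m, (norm (a m) / norm p) *\<^sub>R q) =
        (norm (a m) / norm p) *\<^sub>R (norm p *\<^sub>R sgn (a m), q)"
      using assms(2) by (simp add: sgn_div_norm)
    have "norm (a m) / norm p > 0"
      using elim assms(2) by simp
    then show ?case
      unfolding pair sgn_scaleR using elim assms(2) by simp
  qed
  moreover have "norm p *\<^sub>R sgn p = p"
    using assms(2) by (simp add: sgn_div_norm)
  with tendsto_Pair[OF tendsto_scaleR[OF tendsto_const[of "norm p"] assms(1)] tendsto_const[of q]]
  have "(\<lambda>m. (norm p *\<^sub>R sgn (a m), q)) \<longlonglongrightarrow> (p, q)"
    by simp
  then have "(\<lambda>m. sgn (norm p *\<^sub>R sgn (a m), q)) \<longlonglongrightarrow> sgn (p, q)"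
    by (rule tendsto_sgn) (simp add: assms(2) zero_prod_def)
  ultimately show ?thesis
    by (rule Lim_transform_eventually[rotated])
qed

section \<open>Asymptotically close sequences\<close>

(* The paper's condition |a_m - b_m| << |a_m|, |b_m|: by asymp_close_sym either of the two
   bounds implies the other. *)
definition asymp_close :: "(nat \<Rightarrow> 'a::real_normed_vector) \<Rightarrow> (nat \<Rightarrow> 'a) \<Rightarrow> bool" where
  "asymp_close a b \<longleftrightarrow> much_smaller (\<lambda>m. a m - b m) a"

lemma asymp_close_norm_le:
  assumes "asymp_close a b"
  shows "eventually (\<lambda>m. norm (a m) \<le> 2 * norm (b m)) sequentially"
proof -
  have "eventually (\<lambda>m. a m \<noteq> 0 \<and> norm (a m - b m) \<le> 1 / 2 * norm (a m)) sequentially"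
    using much_smaller_eventually_le[of _ a "1 / 2"] assms by (simp add: asymp_close_def)
  then show ?thesis
  proof eventually_elim
    case (elim m)
    then show ?case using norm_triangle_ineq2[of "a m" "b m"] by linarith
  qed
qed

lemma asymp_close_sym:
  assumes "asymp_close a b"
  shows "asymp_close b a"
proof -
  have "eventually (\<lambda>m. a m \<noteq> 0) sequentially"
    using assms by (simp add: asymp_close_def much_smaller_def)
  with asymp_close_norm_le[OF assms] have "eventually (\<lambda>m. b m \<noteq> 0) sequentially"
    by eventually_elim auto
  moreover have "eventually (\<lambda>m. norm (b m - a m) \<le> 1 * norm (a m - b m)) sequentially"
    by (simp add: norm_minus_commute)
  ultimately show ?thesis
    unfolding asymp_close_def
    by (intro much_smaller_bigO[OF assms[unfolded asymp_close_def] _ asymp_close_norm_le[OF assms]])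
qed

lemma asymp_close_trans:
  assumes "asymp_close a b" "much_smaller (\<lambda>m. b m - c m) a"
  shows "asymp_close a c"
  using much_smaller_add[OF assms[unfolded asymp_close_def]] by (simp add: asymp_close_def)

lemma asymp_close_tendsto_zero:
  assumes "asymp_close a b" "a \<longlonglongrightarrow> 0"
  shows "b \<longlonglongrightarrow> 0"
proof (rule Lim_null_comparison)
  show "eventually (\<lambda>m. norm (b m) \<le> 2 * norm (a m)) sequentially"
    using asymp_close_norm_le[OF asymp_close_sym[OF assms(1)]] .
  show "(\<lambda>m. 2 * norm (a m)) \<longlonglongrightarrow> 0"
    using tendsto_mult_right_zero[OF tendsto_norm_zero[OF assms(2)]] by simp
qed

lemma asymp_close_sgn:
  assumes "asymp_close a b" "(\<lambda>m. sgn (a m)) \<longlonglongrightarrow> d"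
  shows "(\<lambda>m. sgn (b m)) \<longlonglongrightarrow> d"
proof -
  from assms(1) have nz: "eventually (\<lambda>m. a m \<noteq> 0) sequentially"
    and ratio: "(\<lambda>m. norm (a m - b m) / norm (a m)) \<longlonglongrightarrow> 0"
    by (auto simp: asymp_close_def much_smaller_def)
  have "(\<lambda>m. sgn (b m) - sgn (a m)) \<longlonglongrightarrow> 0"
  proof (rule Lim_null_comparison)
    show "eventually (\<lambda>m. norm (sgn (b m) - sgn (a m)) \<le> 2 * (norm (a m - b m) / norm (a m)))
        sequentially"
      using nz by eventually_elim (metis norm_minus_commute norm_sgn_diff_le)
    show "(\<lambda>m. 2 * (norm (a m - b m) / norm (a m))) \<longlonglongrightarrow> 0"
      using tendsto_mult_right_zero[OF ratio] .
  qed
  from tendsto_add[OF this assms(2)] show ?thesis by simp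
qed

lemma asymp_close_projection:
  assumes "asymp_close a b"
    and "eventually (\<lambda>m. norm (a' m - b' m) \<le> norm (a m - b m)) sequentially"
    and "eventually (\<lambda>m. norm (a m) \<le> C * norm (a' m)) sequentially"
  shows "asymp_close a' b'"
proof -
  have "eventually (\<lambda>m. a m \<noteq> 0) sequentially"
    using assms(1) by (simp add: asymp_close_def much_smaller_def)
  with assms(3) have "eventually (\<lambda>m. a' m \<noteq> 0) sequentially"
    by eventually_elim auto
  moreover have "eventually (\<lambda>m. norm (a' m - b' m) \<le> 1 * norm (a m - b m)) sequentially"
    using assms(2) by simp
  ultimately show ?thesis
    unfolding asymp_close_def
    by (intro much_smaller_bigO[OF assms(1)[unfolded asymp_close_def] _ assms(3)])
qed

lemma SSP_iff_asymp_close: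
  "SSP A \<longleftrightarrow>
    (\<forall>a. a \<longlonglongrightarrow> 0 \<and> (\<exists>d\<in>direction_set A. (\<lambda>m. sgn (a m)) \<longlonglongrightarrow> d) \<longrightarrow>
      (\<exists>b. (\<forall>m. b m \<in> A) \<and> asymp_close a b))"
proof -
  have close: "much_smaller (\<lambda>m. a m - b m) a \<and> much_smaller (\<lambda>m. a m - b m) b \<longleftrightarrow>
      asymp_close a b" for a b :: "nat \<Rightarrow> 'a"
  proof
    assume "much_smaller (\<lambda>m. a m - b m) a \<and> much_smaller (\<lambda>m. a m - b m) b"
    then show "asymp_close a b" by (simp add: asymp_close_def)
  next
    assume ab: "asymp_close a b"
    have "much_smaller (\<lambda>m. a m - b m) b \<longleftrightarrow> asymp_close b a"
      by (simp add: asymp_close_def much_smaller_def norm_minus_commute)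
    with ab asymp_close_sym[OF ab]
    show "much_smaller (\<lambda>m. a m - b m) a \<and> much_smaller (\<lambda>m. a m - b m) b"
      unfolding asymp_close_def by blast
  qed
  show ?thesis
    unfolding SSP_def sgn_div_norm close ..
qed

lemma SSP_imageE:
  assumes "SSP (f ` B)" "a \<longlonglongrightarrow> 0" "d \<in> direction_set (f ` B)" "(\<lambda>m. sgn (a m)) \<longlonglongrightarrow> d"
  obtains y where "\<And>m. y m \<in> B" "asymp_close a (\<lambda>m. f (y m))"
proof -
  have "\<exists>d\<in>direction_set (f ` B). (\<lambda>m. sgn (a m)) \<longlonglongrightarrow> d"
    using assms(3,4) by blast
  then obtain b where b: "\<forall>m. b m \<in> f ` B" "asymp_close a b"
    using assms(1,2) unfolding SSP_iff_asymp_close by blast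
  then have "\<forall>m. \<exists>y. y \<in> B \<and> b m = f y" by blast
  from choice[OF this] obtain y where y: "\<forall>m. y m \<in> B \<and> b m = f (y m)" by blast
  then have "b = (\<lambda>m. f (y m))" by auto
  with b(2) y show thesis using that[of y] by simp
qed

section \<open>Direction sets; symmetry and localisation of (SSP)\<close>

lemma direction_setI:
  assumes "\<And>i. x i \<in> A" "\<And>i. x i \<noteq> 0" "x \<longlonglongrightarrow> 0" "(\<lambda>i. sgn (x i)) \<longlonglongrightarrow> d"
  shows "d \<in> direction_set A"
proof -
  have "(\<lambda>i. norm (sgn (x i))) \<longlonglongrightarrow> norm d" using tendsto_norm[OF assms(4)] .
  moreover have "(\<lambda>i. norm (sgn (x i))) = (\<lambda>i. 1)" using assms(2) by (simp add: norm_sgn)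
  ultimately have "norm d = 1" using LIMSEQ_unique tendsto_const by metis
  with assms show ?thesis
    unfolding direction_set_def sgn_div_norm by blast
qed

lemma direction_setE:
  assumes "d \<in> direction_set A"
  obtains x where "\<And>i. x i \<in> A" "\<And>i. x i \<noteq> 0" "x \<longlonglongrightarrow> 0" "(\<lambda>i. sgn (x i)) \<longlonglongrightarrow> d"
proof -
  from assms obtain x where "\<forall>i. x i \<in> A - {0}" "x \<longlonglongrightarrow> 0" "(\<lambda>i. x i /\<^sub>R norm (x i)) \<longlonglongrightarrow> d"
    unfolding direction_set_def by blast
  then show thesis using that[of x] by (simp add: sgn_div_norm)
qed

lemma direction_set_norm: "d \<in> direction_set A \<Longrightarrow> norm d = 1"
  by (simp add: direction_set_def)

lemma direction_set_Int_open:
  assumes "open U" "0 \<in> U"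
  shows "direction_set (A \<inter> U) = direction_set A"
proof
  show "direction_set (A \<inter> U) \<subseteq> direction_set A"
    unfolding direction_set_def by blast
  show "direction_set A \<subseteq> direction_set (A \<inter> U)"
  proof
    fix d assume "d \<in> direction_set A"
    then obtain x where x: "\<And>i. x i \<in> A" "\<And>i. x i \<noteq> 0" "x \<longlonglongrightarrow> 0"
      "(\<lambda>i. sgn (x i)) \<longlonglongrightarrow> d"
      by (rule direction_setE) blast
    obtain N where "\<And>i. i \<ge> N \<Longrightarrow> x i \<in> U"
      using topological_tendstoD[OF x(3) assms] by (auto simp: eventually_sequentially)
    then show "d \<in> direction_set (A \<inter> U)"
      using x LIMSEQ_ignore_initial_segment[OF x(3), of N]
        LIMSEQ_ignore_initial_segment[OF x(4), of N]
      by (intro direction_setI[of "\<lambda>i. x (i + N)"]) auto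
  qed
qed

lemma direction_set_convergent_subseq:
  fixes v :: "nat \<Rightarrow> 'a::{real_normed_vector, heine_borel}"
  assumes "\<And>i. v i \<in> S" "\<And>i. v i \<noteq> 0" "v \<longlonglongrightarrow> 0"
  obtains r l where "strict_mono r" "(\<lambda>i. sgn (v (r i))) \<longlonglongrightarrow> l" "l \<in> direction_set S"
proof -
  have "bounded (range (\<lambda>i. sgn (v i)))"
    by (rule boundedI[of _ 1]) (auto simp: norm_sgn)
  then obtain l r where r: "strict_mono r" and lim: "((\<lambda>i. sgn (v i)) \<circ> r) \<longlonglongrightarrow> l"
    using bounded_imp_convergent_subsequence by blast
  have "l \<in> direction_set S"
    using assms lim LIMSEQ_subseq_LIMSEQ[OF assms(3) r]
    by (intro direction_setI[of "v \<circ> r"]) (auto simp: comp_def)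
  with r lim show ?thesis using that by (simp add: comp_def)
qed

lemma norm_swap [simp]: "norm (prod.swap x) = norm x"
  by (cases x) (simp add: norm_Pair add.commute)

lemma sgn_swap: "sgn (prod.swap x) = prod.swap (sgn x)"
  by (cases x) (simp add: sgn_div_norm norm_Pair add.commute)

lemma swap_diff: "prod.swap (x - y) = prod.swap x - prod.swap y"
  by (cases x, cases y) simp

lemma tendsto_swap:
  fixes f :: "nat \<Rightarrow> 'a::t2_space \<times> 'b::t2_space"
  shows "f \<longlonglongrightarrow> l \<Longrightarrow> (\<lambda>i. prod.swap (f i)) \<longlonglongrightarrow> prod.swap l"
  using isCont_tendsto_compose[OF isCont_swap] .

lemma direction_set_swap:
  assumes "d \<in> direction_set (prod.swap ` S)"
  shows "prod.swap d \<in> direction_set S"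
proof -
  obtain x where x: "\<And>i. x i \<in> prod.swap ` S" "\<And>i. x i \<noteq> 0" "x \<longlonglongrightarrow> 0"
    "(\<lambda>i. sgn (x i)) \<longlonglongrightarrow> d"
    using assms by (rule direction_setE) blast
  have "prod.swap (x i) \<in> S" for i
    using x(1)[of i] by auto
  moreover have "prod.swap (x i) \<noteq> 0" for i
    using x(2)[of i] by (metis norm_eq_zero norm_swap)
  ultimately show ?thesis
    using tendsto_swap[OF x(3)] tendsto_swap[OF x(4)]
    by (intro direction_setI[of "\<lambda>i. prod.swap (x i)"]) (auto simp: sgn_swap zero_prod_def)
qed

lemma SSP_swap:
  assumes "SSP S"
  shows "SSP (prod.swap ` S)"
  unfolding SSP_iff_asymp_close
proof (intro allI impI, elim conjE bexE)
  fix a d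
  assume a0: "a \<longlonglongrightarrow> 0" and d: "d \<in> direction_set (prod.swap ` S)"
    and ad: "(\<lambda>m. sgn (a m)) \<longlonglongrightarrow> d"
  have "(\<lambda>m. sgn (prod.swap (a m))) \<longlonglongrightarrow> prod.swap d"
    using tendsto_swap[OF ad] by (simp add: sgn_swap)
  moreover have "(\<lambda>m. prod.swap (a m)) \<longlonglongrightarrow> 0"
    using tendsto_swap[OF a0] by (simp add: zero_prod_def)
  ultimately obtain b where b: "\<forall>m. b m \<in> S" "asymp_close (\<lambda>m. prod.swap (a m)) b"
    using assms direction_set_swap[OF d] unfolding SSP_iff_asymp_close by blast
  have "norm (a m - prod.swap (b m)) = norm (prod.swap (a m) - b m)" for m
    by (metis norm_swap swap_swap swap_diff)
  then have "asymp_close a (\<lambda>m. prod.swap (b m))"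
    by (intro asymp_close_projection[OF b(2), of _ _ 1]) simp_all
  moreover have "\<forall>m. prod.swap (b m) \<in> prod.swap ` S" using b(1) by blast
  ultimately show "\<exists>b. (\<forall>m. b m \<in> prod.swap ` S) \<and> asymp_close a b"
    by (intro exI[of _ "\<lambda>m. prod.swap (b m)"] conjI)
qed

lemma SSP_Int_open:
  assumes U: "open U" "0 \<in> U"
  shows "SSP (A \<inter> U) \<longleftrightarrow> SSP A"
proof
  assume "SSP (A \<inter> U)"
  then show "SSP A"
    unfolding SSP_iff_asymp_close direction_set_Int_open[OF U] by (meson Int_iff)
next
  assume S: "SSP A"
  show "SSP (A \<inter> U)"
    unfolding SSP_iff_asymp_close
  proof (intro allI impI, elim conjE bexE)
    fix a d
    assume a0: "a \<longlonglongrightarrow> 0" and d: "d \<in> direction_set (A \<inter> U)"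
      and ad: "(\<lambda>m. sgn (a m)) \<longlonglongrightarrow> d"
    obtain x0 where x0: "x0 \<in> A \<inter> U"
      using d by (rule direction_setE) blast
    obtain b where b: "\<forall>m. b m \<in> A" "asymp_close a b"
      using S a0 ad d unfolding SSP_iff_asymp_close direction_set_Int_open[OF U] by meson
    define b' where "b' m = (if b m \<in> U then b m else x0)" for m
    have "eventually (\<lambda>m. b m \<in> U) sequentially"
      using topological_tendstoD[OF asymp_close_tendsto_zero[OF b(2) a0] U] .
    then have "eventually (\<lambda>m. norm (a m - b' m) \<le> norm (a m - b m)) sequentially"
      by eventually_elim (simp add: b'_def)
    then have "asymp_close a b'"
      by (intro asymp_close_projection[OF b(2), of _ _ 1]) auto
    moreover have "\<forall>m. b' m \<in> A \<inter> U" using b(1) x0 by (simp add: b'_def)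
    ultimately show "\<exists>b. (\<forall>m. b m \<in> A \<inter> U) \<and> asymp_close a b"
      by (intro exI[of _ b'] conjI)
  qed
qed

section \<open>Transfer of (SSP) along a bi-Lipschitz graph\<close>

definition bilipschitz_on :: "real \<Rightarrow> real \<Rightarrow> 'a::real_normed_vector set \<Rightarrow>
    ('a \<Rightarrow> 'b::real_normed_vector) \<Rightarrow> bool" where
  "bilipschitz_on k K U f \<longleftrightarrow>
    (\<forall>x\<in>U. \<forall>y\<in>U. k * norm (x - y) \<le> norm (f x - f y) \<and> norm (f x - f y) \<le> K * norm (x - y))"

lemma bilipschitz_on_weaken:
  assumes "bilipschitz_on k K U f" "k' \<le> k" "K \<le> K'"
  shows "bilipschitz_on k' K' U f"
  unfolding bilipschitz_on_def
proof (intro ballI conjI)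
  fix x y assume "x \<in> U" "y \<in> U"
  then have "k * norm (x - y) \<le> norm (f x - f y)" "norm (f x - f y) \<le> K * norm (x - y)"
    using assms(1) by (auto simp: bilipschitz_on_def)
  moreover have "k' * norm (x - y) \<le> k * norm (x - y)" "K * norm (x - y) \<le> K' * norm (x - y)"
    using assms(2,3) by (simp_all add: mult_right_mono)
  ultimately show "k' * norm (x - y) \<le> norm (f x - f y)" "norm (f x - f y) \<le> K' * norm (x - y)"
    by linarith+
qed

lemma bilipschitz_on_norm_bounds:
  assumes "bilipschitz_on k K U f" "0 \<in> U" "f 0 = 0" "x \<in> U"
  shows "k * norm x \<le> norm (f x)" "norm (f x) \<le> K * norm x"
proof -
  have "k * norm (x - 0) \<le> norm (f x - f 0) \<and> norm (f x - f 0) \<le> K * norm (x - 0)"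
    using assms(1,2,4) unfolding bilipschitz_on_def by blast
  with assms(3) show "k * norm x \<le> norm (f x)" "norm (f x) \<le> K * norm x" by simp_all
qed

lemma direction_set_Pair_subseq:
  fixes f :: "nat \<Rightarrow> 'a::euclidean_space" and g :: "nat \<Rightarrow> 'b::euclidean_space"
  assumes S: "\<And>i. (f i, g i) \<in> S" "\<And>i. (f i, g i) \<noteq> 0" "(\<lambda>i. (f i, g i)) \<longlonglongrightarrow> 0"
    and "0 < \<epsilon>" and f: "\<And>i. \<epsilon> * norm (f i, g i) \<le> norm (f i)"
    and g: "\<And>i. \<epsilon> * norm (f i, g i) \<le> norm (g i)"
  obtains r p q where "strict_mono r" "(p, q) \<in> direction_set S"
    and "p \<noteq> 0" "(\<lambda>i. sgn (f (r i))) \<longlonglongrightarrow> sgn p"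
    and "q \<noteq> 0" "(\<lambda>i. sgn (g (r i))) \<longlonglongrightarrow> sgn q"
proof -
  define c where "c i = 1 / norm (f i, g i)" for i
  have c: "c i > 0" for i using S(2) by (simp add: c_def)
  obtain r l where r: "strict_mono r" and lim: "(\<lambda>i. sgn (f (r i), g (r i))) \<longlonglongrightarrow> l"
    and l: "l \<in> direction_set S"
    using S by (rule direction_set_convergent_subseq) blast
  obtain p q where pq_def: "l = (p, q)" by (cases l)
  have "(\<lambda>i. c (r i) *\<^sub>R f (r i)) \<longlonglongrightarrow> p" "(\<lambda>i. c (r i) *\<^sub>R g (r i)) \<longlonglongrightarrow> q"
    using tendsto_fst[OF lim] tendsto_snd[OF lim]
    by (simp_all add: pq_def c_def sgn_div_norm divide_inverse)
  moreover have "u \<noteq> 0"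
    if "\<And>i. \<epsilon> \<le> norm (c i *\<^sub>R h i)" "(\<lambda>i. c (r i) *\<^sub>R h (r i)) \<longlonglongrightarrow> u"
    for h :: "nat \<Rightarrow> 'c::real_normed_vector" and u
    using LIMSEQ_le_const[OF tendsto_norm[OF that(2)]] that(1) \<open>0 < \<epsilon>\<close> by force
  moreover have "\<epsilon> \<le> norm (c i *\<^sub>R f i)" "\<epsilon> \<le> norm (c i *\<^sub>R g i)" for i
    using f[of i] g[of i] S(2)[of i] by (simp_all add: c_def field_simps)
  ultimately have "p \<noteq> 0" "q \<noteq> 0" by blast+
  moreover from calculation have "(\<lambda>i. sgn (f (r i))) \<longlonglongrightarrow> sgn p" "(\<lambda>i. sgn (g (r i))) \<longlonglongrightarrow> sgn q"
    using \<open>(\<lambda>i. c (r i) *\<^sub>R f (r i)) \<longlonglongrightarrow> p\<close> \<open>(\<lambda>i. c (r i) *\<^sub>R g (r i)) \<longlonglongrightarrow> q\<close> c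
    by (auto intro: tendsto_sgn_rescaled)
  ultimately show thesis
    using that r l unfolding pq_def by blast
qed

lemma graph_direction_subseq:
  fixes \<phi> \<psi> :: "'a::euclidean_space \<Rightarrow> 'a"
  assumes \<phi>: "bilipschitz_on k K U \<phi>" and \<psi>: "bilipschitz_on k K U \<psi>" and "0 < k" "k \<le> K"
    and zero: "0 \<in> U" "\<phi> 0 = 0" "\<psi> 0 = 0"
    and y: "\<And>i. y i \<in> U" "\<And>i. y i \<noteq> 0" "y \<longlonglongrightarrow> 0"
  obtains r p q where "strict_mono r" "(p, q) \<in> direction_set ((\<lambda>x. (\<phi> x, \<psi> x)) ` U)"
    and "p \<noteq> 0" "(\<lambda>i. sgn (\<phi> (y (r i)))) \<longlonglongrightarrow> sgn p"
    and "q \<noteq> 0" "(\<lambda>i. sgn (\<psi> (y (r i)))) \<longlonglongrightarrow> sgn q"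
proof -
  have "K > 0" using \<open>0 < k\<close> \<open>k \<le> K\<close> by simp
  note bounds = bilipschitz_on_norm_bounds[OF _ zero(1) _ y(1)]
  have graph_le: "norm (\<phi> (y i), \<psi> (y i)) \<le> 2 * K * norm (y i)" for i
    using norm_Pair_le[of "\<phi> (y i)" "\<psi> (y i)"] bounds(2)[OF \<phi> zero(2), of i]
      bounds(2)[OF \<psi> zero(3), of i]
    unfolding mult.assoc by linarith
  have component: "k / (2 * K) * norm (\<phi> (y i), \<psi> (y i)) \<le> norm (f (y i))"
    if "bilipschitz_on k K U f" "f 0 = 0" for f :: "'a \<Rightarrow> 'a" and i
  proof -
    have "k * norm (\<phi> (y i), \<psi> (y i)) \<le> 2 * K * (k * norm (y i))"
      using graph_le[of i] \<open>0 < k\<close> by (simp add: mult.left_commute)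
    also have "\<dots> \<le> 2 * K * norm (f (y i))"
      using bounds(1)[OF that] \<open>K > 0\<close> by simp
    finally show ?thesis
      using \<open>K > 0\<close> by (simp add: field_simps)
  qed
  have nz: "(\<phi> (y i), \<psi> (y i)) \<noteq> 0" for i
  proof -
    have "0 < k * norm (y i)" using y(2) \<open>0 < k\<close> by simp
    with bounds(1)[OF \<phi> zero(2), of i] have "\<phi> (y i) \<noteq> 0" by auto
    then show ?thesis by (simp add: zero_prod_def)
  qed
  have lim: "(\<lambda>i. (\<phi> (y i), \<psi> (y i))) \<longlonglongrightarrow> 0"
  proof (rule Lim_null_comparison)
    show "eventually (\<lambda>i. norm (\<phi> (y i), \<psi> (y i)) \<le> 2 * K * norm (y i)) sequentially"
      using graph_le by simp
    show "(\<lambda>i. 2 * K * norm (y i)) \<longlonglongrightarrow> 0"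
      using tendsto_mult_right_zero[OF tendsto_norm_zero[OF y(3)], of "2 * K"] .
  qed
  have "(\<phi> (y i), \<psi> (y i)) \<in> (\<lambda>x. (\<phi> x, \<psi> x)) ` U" for i
    using y(1) by blast
  moreover have "0 < k / (2 * K)" using \<open>0 < k\<close> \<open>K > 0\<close> by simp
  ultimately show thesis
    by (rule direction_set_Pair_subseq[OF _ nz lim _ component[OF \<phi> zero(2)]
          component[OF \<psi> zero(3)]]) (rule that)
qed

lemma direction_set_graph_lift:
  fixes \<phi> \<psi> :: "'a::euclidean_space \<Rightarrow> 'a"
  assumes \<phi>: "bilipschitz_on k K U \<phi>" and \<psi>: "bilipschitz_on k K U \<psi>" and "0 < k" "k \<le> K"
    and zero: "0 \<in> U" "\<phi> 0 = 0" "\<psi> 0 = 0" and "B \<subseteq> U"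
    and "d \<in> direction_set (\<phi> ` B)"
  obtains p q where "(p, q) \<in> direction_set ((\<lambda>x. (\<phi> x, \<psi> x)) ` U)"
    and "sgn p = d" and "q \<noteq> 0" and "sgn q \<in> direction_set (\<psi> ` B)"
proof -
  obtain x where x: "\<And>i. x i \<in> \<phi> ` B" "\<And>i. x i \<noteq> 0" "x \<longlonglongrightarrow> 0" "(\<lambda>i. sgn (x i)) \<longlonglongrightarrow> d"
    using assms(9) by (rule direction_setE) blast
  have "\<forall>i. \<exists>y. y \<in> B \<and> x i = \<phi> y" using x(1) by blast
  from choice[OF this] obtain y where "\<forall>i. y i \<in> B \<and> x i = \<phi> (y i)" by blast
  then have yB: "\<And>i. y i \<in> B" and xy: "\<And>i. x i = \<phi> (y i)" by auto
  have yU: "y i \<in> U" for i using yB \<open>B \<subseteq> U\<close> by blast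
  note bounds = bilipschitz_on_norm_bounds[OF _ zero(1) _ yU]
  have ynz: "y i \<noteq> 0" for i
    using x(2)[of i] zero(2) by (auto simp: xy)
  have y0: "y \<longlonglongrightarrow> 0"
  proof (rule Lim_null_comparison)
    show "eventually (\<lambda>i. norm (y i) \<le> norm (x i) / k) sequentially"
      using bounds(1)[OF \<phi> zero(2)] \<open>0 < k\<close> by (simp add: xy pos_le_divide_eq mult.commute)
    show "(\<lambda>i. norm (x i) / k) \<longlonglongrightarrow> 0"
      using tendsto_divide_zero[OF tendsto_norm_zero[OF x(3)]] .
  qed
  obtain r p q where r: "strict_mono r" and pq: "(p, q) \<in> direction_set ((\<lambda>x. (\<phi> x, \<psi> x)) ` U)"
    and p: "(\<lambda>i. sgn (\<phi> (y (r i)))) \<longlonglongrightarrow> sgn p" and "q \<noteq> 0"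
    and q: "(\<lambda>i. sgn (\<psi> (y (r i)))) \<longlonglongrightarrow> sgn q"
    by (rule graph_direction_subseq[OF \<phi> \<psi> \<open>0 < k\<close> \<open>k \<le> K\<close> zero yU ynz y0])
  have "(\<lambda>i. sgn (x (r i))) \<longlonglongrightarrow> d"
    using LIMSEQ_subseq_LIMSEQ[OF x(4) r] by (simp add: comp_def)
  with p have "sgn p = d"
    by (auto simp: xy intro: LIMSEQ_unique)
  moreover have "sgn q \<in> direction_set (\<psi> ` B)"
  proof (rule direction_setI[OF _ _ _ q])
    show "\<psi> (y (r i)) \<in> \<psi> ` B" for i using yB by blast
    show "\<psi> (y (r i)) \<noteq> 0" for i
    proof -
      have "0 < k * norm (y (r i))" using ynz \<open>0 < k\<close> by simp
      then show ?thesis using bounds(1)[OF \<psi> zero(3), of "r i"] by auto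
    qed
    have "(\<lambda>i. \<psi> (y i)) \<longlonglongrightarrow> 0"
    proof (rule Lim_null_comparison)
      show "eventually (\<lambda>i. norm (\<psi> (y i)) \<le> K * norm (y i)) sequentially"
        using bounds(2)[OF \<psi> zero(3)] by simp
      show "(\<lambda>i. K * norm (y i)) \<longlonglongrightarrow> 0"
        using tendsto_mult_right_zero[OF tendsto_norm_zero[OF y0]] .
    qed
    from LIMSEQ_subseq_LIMSEQ[OF this r] show "(\<lambda>i. \<psi> (y (r i))) \<longlonglongrightarrow> 0"
      by (simp add: comp_def)
  qed
  ultimately show thesis
    using that[OF pq] \<open>q \<noteq> 0\<close> by blast
qed

lemma SSP_graph_approximation:
  fixes \<phi> :: "'c \<Rightarrow> 'a::real_normed_vector" and \<psi> :: "'c \<Rightarrow> 'b::real_normed_vector"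
  assumes graph: "SSP ((\<lambda>x. (\<phi> x, \<psi> x)) ` U)"
    and pq: "(p, q) \<in> direction_set ((\<lambda>x. (\<phi> x, \<psi> x)) ` U)" and "p \<noteq> 0" "q \<noteq> 0"
    and a0: "a \<longlonglongrightarrow> 0" and ap: "(\<lambda>m. sgn (a m)) \<longlonglongrightarrow> sgn p"
  obtains w C where "\<And>m. w m \<in> U" "asymp_close a (\<lambda>m. \<phi> (w m))"
    and "(\<lambda>m. \<psi> (w m)) \<longlonglongrightarrow> 0" "(\<lambda>m. sgn (\<psi> (w m))) \<longlonglongrightarrow> sgn q"
    and "eventually (\<lambda>m. norm (\<psi> (w m)) \<le> C * norm (a m)) sequentially"
proof -
  have a_nz: "eventually (\<lambda>m. a m \<noteq> 0) sequentially"
    using \<open>p \<noteq> 0\<close> by (intro eventually_nonzero_if_tendsto_sgn[OF ap]) (simp add: sgn_zero_iff)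
  txt \<open>The companion z points in the direction q and has the size of a, so (a, z) tends to 0
    in the graph direction (p, q).\<close>
  define Q where "Q = norm q / norm p"
  define z where "z m = (norm (a m) / norm p) *\<^sub>R q" for m
  have Q: "Q > 0" and norm_z: "norm (z m) = Q * norm (a m)" for m
    using \<open>p \<noteq> 0\<close> \<open>q \<noteq> 0\<close> by (simp_all add: Q_def z_def)
  have "(\<lambda>m. norm (a m) / norm p) \<longlonglongrightarrow> 0"
    using tendsto_divide_zero[OF tendsto_norm_zero[OF a0]] .
  from tendsto_scaleR[OF this tendsto_const[of q]] have z0: "z \<longlonglongrightarrow> 0"
    by (simp add: z_def[abs_def])
  have "(\<lambda>m. (a m, z m)) \<longlonglongrightarrow> 0"
    using tendsto_Pair[OF a0 z0] by (simp add: zero_prod_def)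
  moreover have "(\<lambda>m. sgn (a m, z m)) \<longlonglongrightarrow> (p, q)"
    using tendsto_sgn_Pair_rescaled[OF ap \<open>p \<noteq> 0\<close>, of q] direction_set_norm[OF pq]
    by (simp add: z_def sgn_div_norm)
  ultimately obtain w where wU: "\<And>m. w m \<in> U"
    and close_graph: "asymp_close (\<lambda>m. (a m, z m)) (\<lambda>m. (\<phi> (w m), \<psi> (w m)))"
    by (rule SSP_imageE[OF graph _ pq]) blast
  have diff: "(a m, z m) - (\<phi> (w m), \<psi> (w m)) = (a m - \<phi> (w m), z m - \<psi> (w m))" for m
    by simp
  have a_bound: "norm (a m, z m) \<le> (1 + Q) * norm (a m)" for m
    using norm_Pair_le[of "a m" "z m"] norm_z[of m] by (simp add: algebra_simps)
  have close_a: "asymp_close a (\<lambda>m. \<phi> (w m))"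
    by (rule asymp_close_projection[OF close_graph, where C = "1 + Q"])
      (simp_all add: diff norm_fst_le a_bound)
  have z_bound: "norm (a m, z m) \<le> (1 / Q + 1) * norm (z m)" for m
    using norm_Pair_le[of "a m" "z m"] norm_z[of m] Q by (simp add: algebra_simps)
  have close_z: "asymp_close z (\<lambda>m. \<psi> (w m))"
    by (rule asymp_close_projection[OF close_graph, where C = "1 / Q + 1"])
      (simp_all add: diff norm_snd_le z_bound)
  have "(\<lambda>m. sgn (z m)) \<longlonglongrightarrow> sgn q"
    using a_nz \<open>p \<noteq> 0\<close> by (intro Lim_transform_eventually[OF tendsto_const])
      (auto simp: z_def sgn_scaleR elim: eventually_mono)
  moreover have "eventually (\<lambda>m. norm (\<psi> (w m)) \<le> 2 * Q * norm (a m)) sequentially"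
    using asymp_close_norm_le[OF asymp_close_sym[OF close_z]] by eventually_elim (simp add: norm_z)
  ultimately show thesis
    using that[OF wU close_a asymp_close_tendsto_zero[OF close_z z0] asymp_close_sgn[OF close_z]]
    by blast
qed

lemma SSP_image_transfer:
  fixes \<phi> \<psi> :: "'a::euclidean_space \<Rightarrow> 'a"
  assumes \<phi>: "bilipschitz_on k K U \<phi>" and \<psi>: "bilipschitz_on k K U \<psi>" and "0 < k" "k \<le> K"
    and zero: "0 \<in> U" "\<phi> 0 = 0" "\<psi> 0 = 0" and "B \<subseteq> U"
    and graph: "SSP ((\<lambda>x. (\<phi> x, \<psi> x)) ` U)" and \<psi>B: "SSP (\<psi> ` B)"
  shows "SSP (\<phi> ` B)"
  unfolding SSP_iff_asymp_close
proof (intro allI impI, elim conjE bexE)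
  fix a d
  assume a0: "a \<longlonglongrightarrow> 0" and d: "d \<in> direction_set (\<phi> ` B)"
    and ad: "(\<lambda>m. sgn (a m)) \<longlonglongrightarrow> d"
  obtain p q where pq: "(p, q) \<in> direction_set ((\<lambda>x. (\<phi> x, \<psi> x)) ` U)" and "sgn p = d"
    and "q \<noteq> 0" and q: "sgn q \<in> direction_set (\<psi> ` B)"
    by (rule direction_set_graph_lift[OF \<phi> \<psi> \<open>0 < k\<close> \<open>k \<le> K\<close> zero \<open>B \<subseteq> U\<close> d])
  have "p \<noteq> 0"
    using \<open>sgn p = d\<close> direction_set_norm[OF d] by auto
  with \<open>sgn p = d\<close> have a_nz: "eventually (\<lambda>m. a m \<noteq> 0) sequentially"
    by (intro eventually_nonzero_if_tendsto_sgn[OF ad]) (auto simp: sgn_zero_iff)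
  obtain w C where wU: "\<And>m. w m \<in> U" and close_a: "asymp_close a (\<lambda>m. \<phi> (w m))"
    and c0: "(\<lambda>m. \<psi> (w m)) \<longlonglongrightarrow> 0" and cq: "(\<lambda>m. sgn (\<psi> (w m))) \<longlonglongrightarrow> sgn q"
    and size_c: "eventually (\<lambda>m. norm (\<psi> (w m)) \<le> C * norm (a m)) sequentially"
    using ad[folded \<open>sgn p = d\<close>]
    by (rule SSP_graph_approximation[OF graph pq \<open>p \<noteq> 0\<close> \<open>q \<noteq> 0\<close> a0]) blast
  obtain y where yB: "\<And>m. y m \<in> B"
    and close_c: "asymp_close (\<lambda>m. \<psi> (w m)) (\<lambda>m. \<psi> (y m))"
    by (rule SSP_imageE[OF \<psi>B c0 q cq]) blast
  txt \<open>\<phi> \<circ> inv \<psi> is Lipschitz on \<psi>(U), so \<phi> y is as close to \<phi> w as \<psi> y is to \<psi> w.\<close>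
  have "norm (\<phi> (w m) - \<phi> (y m)) \<le> K / k * norm (\<psi> (w m) - \<psi> (y m))" for m
  proof -
    have "w m \<in> U" "y m \<in> U" using wU yB \<open>B \<subseteq> U\<close> by auto
    then have "norm (\<phi> (w m) - \<phi> (y m)) \<le> K * norm (w m - y m)"
      "k * norm (w m - y m) \<le> norm (\<psi> (w m) - \<psi> (y m))"
      using \<phi> \<psi> by (auto simp: bilipschitz_on_def)
    moreover have "K * norm (w m - y m) \<le> K * (norm (\<psi> (w m) - \<psi> (y m)) / k)"
      using calculation(2) \<open>0 < k\<close> \<open>k \<le> K\<close>
      by (intro mult_left_mono) (simp_all add: pos_le_divide_eq mult.commute)
    ultimately show ?thesis by simp
  qed
  then have "eventually (\<lambda>m. norm (\<phi> (w m) - \<phi> (y m))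
      \<le> K / k * norm (\<psi> (w m) - \<psi> (y m))) sequentially"
    by (intro always_eventually allI)
  then have "much_smaller (\<lambda>m. \<phi> (w m) - \<phi> (y m)) a"
    using size_c by (rule much_smaller_bigO[OF close_c[unfolded asymp_close_def] _ _ a_nz])
  then have "asymp_close a (\<lambda>m. \<phi> (y m))"
    by (rule asymp_close_trans[OF close_a])
  moreover have "\<forall>m. \<phi> (y m) \<in> \<phi> ` B" using yB by blast
  ultimately show "\<exists>b. (\<forall>m. b m \<in> \<phi> ` B) \<and> asymp_close a b"
    by (intro exI[of _ "\<lambda>m. \<phi> (y m)"] conjI)
qed

theorem theorem4p7:
  fixes h :: "'a::euclidean_space \<Rightarrow> 'a" and U A :: "'a set"
  assumes "bilipschitz_homeo_germ_on U h"
    and "SSP_map_on U h"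
    and "0 \<in> closure A"
  shows "SSP A \<longleftrightarrow> SSP (h ` (A \<inter> U))"
proof -
  from assms(1) obtain K1 K2 where U: "open U" "0 \<in> U" and "h 0 = 0" and "0 < K1" "K1 \<le> K2"
    and "bilipschitz_on K1 K2 U h"
    unfolding bilipschitz_homeo_germ_on_def bilipschitz_on_def by blast
  define k K where "k = min K1 1" and "K = max K2 1"
  have k: "0 < k" "k \<le> K" using \<open>0 < K1\<close> by (auto simp: k_def K_def)
  have h: "bilipschitz_on k K U h"
    using \<open>bilipschitz_on K1 K2 U h\<close> by (rule bilipschitz_on_weaken) (simp_all add: k_def K_def)
  have id: "bilipschitz_on k K U id"
    by (rule bilipschitz_on_weaken[of 1 1]) (simp_all add: bilipschitz_on_def k_def K_def)
  have "{(x, h x) | x. x \<in> U} = (\<lambda>x. (id x, h x)) ` U" by auto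
  with assms(2) have graph_id_h: "SSP ((\<lambda>x. (id x, h x)) ` U)"
    by (simp add: SSP_map_on_def)
  have "prod.swap ` (\<lambda>x. (id x, h x)) ` U = (\<lambda>x. (h x, id x)) ` U" by auto
  with SSP_swap[OF graph_id_h] have graph_h_id: "SSP ((\<lambda>x. (h x, id x)) ` U)"
    by simp
  have "SSP A \<longleftrightarrow> SSP (id ` (A \<inter> U))"
    using SSP_Int_open[OF U] by simp
  also have "\<dots> \<longleftrightarrow> SSP (h ` (A \<inter> U))"
    using SSP_image_transfer[OF h id k U(2) \<open>h 0 = 0\<close> _ _ graph_h_id]
      SSP_image_transfer[OF id h k U(2) _ \<open>h 0 = 0\<close> _ graph_id_h] by auto
  finally show ?thesis .
qed

end
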